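(* Let $(E,\pi,M)$ be a bundle with a $C^1$ connection $\Delta^h$, let $\{u^I\}$ be bundle coordinates, $\Gamma_\mu^a$ the coefficients of $\Delta^h$ in the frame $\{X_I\}$ adapted to $\{\partial/\partial u^I\}$, and $U$ an open set in the domain of $\{u^I\}$. If the normal coordinates equation $$\Big(\frac{\partial\tilde u^a}{\partial u^b}\Gamma_\mu^b+\frac{\partial\tilde u^a}{\partial u^\mu}\Big)\Big|_U=0$$ admits solutions $\{\tilde u^a\}$ (fibre components of bundle coordinates) on $U$, then $R^a_{\mu\nu}|_U=0$, where $$R^a_{\mu\nu}=\partial_\mu(\Gamma_\nu^a)-\partial_\nu(\Gamma_\mu^a)+\Gamma_\mu^b\partial_b(\Gamma_\nu^a)-\Gamma_\nu^b\partial_b(\Gamma_\mu^a)=X_\mu(\Gamma_\nu^a)-X_\nu(\Gamma_\mu^a),\qquad \partial_I=\partial/\partial u^I,$$ are the fibre components of the curvature of $\Delta^h$.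
   Context: $\dim M=n$, fibre dimension $r$; indices $\mu,\nu$ over $1,\dots,n$, $a,b$ over $n+1,\dots,n+r$, $I$ over $1,\dots,n+r$; summation convention. Bundle coordinates: $u^\mu=x^\mu\circ\pi$ for base coordinates. Vertical distribution $\Delta^v_p=T_p(\pi^{-1}(\pi(p)))$; a connection is an $n$-dimensional distribution $\Delta^h$ with $\Delta^v_p\oplus\Delta^h_p=T_p(E)$. The adapted frame is $X_\mu=(\pi_*|_{\Delta^h})^{-1}\pi_*(\partial_\mu)$, $X_a=\partial_a$, and $X_\mu=\partial_\mu+\Gamma_\mu^b\partial_b$ defines $\Gamma_\mu^a$. *)

theory Defs
  imports "HOL-Analysis.Analysis"
begin

text \<open>A point of the coordinate domain is a vector
  p :: real^('m + 'r); its base coordinates are u^mu = p $ Inl mu and its fibre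
  coordinates are u^a = p $ Inr a.  The index Inl mu / Inr a plays the role of I.\<close>

definition pd :: "(real^'i \<Rightarrow> real) \<Rightarrow> 'i \<Rightarrow> real^'i \<Rightarrow> real" where
  "pd f i p = deriv (\<lambda>t. f (p + t *\<^sub>R axis i 1)) 0"

definition has_partials_on :: "(real^'i) set \<Rightarrow> (real^'i \<Rightarrow> real) \<Rightarrow> bool" where
  "has_partials_on U f \<longleftrightarrow>
     (\<forall>i. \<forall>p\<in>U. (\<lambda>t. f (p + t *\<^sub>R axis i 1)) differentiable (at 0))"

fun Ck_on :: "nat \<Rightarrow> (real^'i) set \<Rightarrow> (real^'i \<Rightarrow> real) \<Rightarrow> bool" where
  "Ck_on 0 U f = continuous_on U f"
| "Ck_on (Suc k) U f = (continuous_on U f \<and> has_partials_on U f \<and> (\<forall>i. Ck_on k U (pd f i)))"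

definition smooth_fun_on :: "(real^'i) set \<Rightarrow> (real^'i \<Rightarrow> real) \<Rightarrow> bool" where
  "smooth_fun_on U f \<longleftrightarrow> (\<forall>k. Ck_on k U f)"

definition curv ::
  "('m::finite \<Rightarrow> 'r::finite \<Rightarrow> real^('m + 'r) \<Rightarrow> real) \<Rightarrow> 'r \<Rightarrow> 'm \<Rightarrow> 'm \<Rightarrow> real^('m + 'r) \<Rightarrow> real" where
  "curv \<Gamma> a \<mu> \<nu> p =
     pd (\<Gamma> \<nu> a) (Inl \<mu>) p - pd (\<Gamma> \<mu> a) (Inl \<nu>) p
     + (\<Sum>b\<in>UNIV. \<Gamma> \<mu> b p * pd (\<Gamma> \<nu> a) (Inr b) p)
     - (\<Sum>b\<in>UNIV. \<Gamma> \<nu> b p * pd (\<Gamma> \<mu> a) (Inr b) p)"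

definition new_coords ::
  "('r::finite \<Rightarrow> real^('m::finite + 'r) \<Rightarrow> real) \<Rightarrow> real^('m + 'r) \<Rightarrow> real^('m + 'r)" where
  "new_coords ut p = (\<chi> i. case i of Inl \<mu> \<Rightarrow> p $ Inl \<mu> | Inr a \<Rightarrow> ut a p)"

definition jacobian :: "(real^'i \<Rightarrow> real^'i) \<Rightarrow> real^'i \<Rightarrow> real^'i^'i" where
  "jacobian F p = (\<chi> i j. pd (\<lambda>q. F q $ i) j p)"

end

theory Submission
  imports Defs
begin

(* Let X\<^sub>\<mu> = \<partial>\<^sub>\<mu> + \<Gamma>\<^sub>\<mu>\<^sup>b \<partial>\<^sub>b (hor_deriv below) be the adapted frame field. The normal
   coordinates equation says X\<^sub>\<mu> ut\<^sup>a = 0 on U, so X\<^sub>\<mu> X\<^sub>\<nu> ut\<^sup>a - X\<^sub>\<nu> X\<^sub>\<mu> ut\<^sup>a = 0. Because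
   the second partials of ut\<^sup>a commute, all second-order terms of this commutator cancel and
   what is left is \<Sum>\<^sub>b R\<^sup>b\<^sub>\<mu>\<^sub>\<nu> \<partial>\<^sub>b ut\<^sup>a. The matrix (\<partial>\<^sub>b ut\<^sup>a) is the fibre block of the
   block-triangular Jacobian of (u\<^sup>\<mu>, u\<^sup>a) \<mapsto> (u\<^sup>\<mu>, ut\<^sup>a), hence invertible, and R = 0. *)

(* Both mixed partials are mean values of the double difference
   g h h - g h 0 - g 0 h + g 0 0, divided by h\<^sup>2. *)

lemma mixed_difference_quotients_meet:
  fixes g ga gb gab gba :: "real \<Rightarrow> real \<Rightarrow> real"
  assumes h: "0 < h"
    and d1: "\<And>s t. s \<in> {0..h} \<Longrightarrow> t \<in> {0..h} \<Longrightarrow> ((\<lambda>\<sigma>. g \<sigma> t) has_real_derivative ga s t) (at s)"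
    and d2: "\<And>s t. s \<in> {0..h} \<Longrightarrow> t \<in> {0..h} \<Longrightarrow> ((\<lambda>\<tau>. g s \<tau>) has_real_derivative gb s t) (at t)"
    and d12: "\<And>s t. s \<in> {0..h} \<Longrightarrow> t \<in> {0..h} \<Longrightarrow> ((\<lambda>\<tau>. ga s \<tau>) has_real_derivative gab s t) (at t)"
    and d21: "\<And>s t. s \<in> {0..h} \<Longrightarrow> t \<in> {0..h} \<Longrightarrow> ((\<lambda>\<sigma>. gb \<sigma> t) has_real_derivative gba s t) (at s)"
  shows "\<exists>s t s' t'. s \<in> {0<..<h} \<and> t \<in> {0<..<h} \<and> s' \<in> {0<..<h} \<and> t' \<in> {0<..<h}
           \<and> gab s t = gba s' t'"
proof -
  have "\<exists>\<xi>. 0 < \<xi> \<and> \<xi> < h \<and> (g h h - g h 0) - (g 0 h - g 0 0) = (h - 0) * (ga \<xi> h - ga \<xi> 0)"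
    by (rule MVT2) (use h in \<open>auto intro!: DERIV_diff d1\<close>)
  then obtain \<xi> where \<xi>: "0 < \<xi>" "\<xi> < h"
    and e1: "(g h h - g h 0) - (g 0 h - g 0 0) = (h - 0) * (ga \<xi> h - ga \<xi> 0)"
    by blast
  have "\<exists>\<eta>. 0 < \<eta> \<and> \<eta> < h \<and> ga \<xi> h - ga \<xi> 0 = (h - 0) * gab \<xi> \<eta>"
    by (rule MVT2) (use h \<xi> in \<open>auto intro!: d12\<close>)
  then obtain \<eta> where \<eta>: "0 < \<eta>" "\<eta> < h" and e2: "ga \<xi> h - ga \<xi> 0 = (h - 0) * gab \<xi> \<eta>"
    by blast
  have "\<exists>\<eta>'. 0 < \<eta>' \<and> \<eta>' < h \<and> (g h h - g 0 h) - (g h 0 - g 0 0) = (h - 0) * (gb h \<eta>' - gb 0 \<eta>')"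
    by (rule MVT2) (use h in \<open>auto intro!: DERIV_diff d2\<close>)
  then obtain \<eta>' where \<eta>': "0 < \<eta>'" "\<eta>' < h"
    and e3: "(g h h - g 0 h) - (g h 0 - g 0 0) = (h - 0) * (gb h \<eta>' - gb 0 \<eta>')"
    by blast
  have "\<exists>\<xi>'. 0 < \<xi>' \<and> \<xi>' < h \<and> gb h \<eta>' - gb 0 \<eta>' = (h - 0) * gba \<xi>' \<eta>'"
    by (rule MVT2) (use h \<eta>' in \<open>auto intro!: d21\<close>)
  then obtain \<xi>' where \<xi>': "0 < \<xi>'" "\<xi>' < h" and e4: "gb h \<eta>' - gb 0 \<eta>' = (h - 0) * gba \<xi>' \<eta>'"
    by blast
  have "h * h * gab \<xi> \<eta> = h * h * gba \<xi>' \<eta>'"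
    using e1 e2 e3 e4 by (simp add: algebra_simps)
  then have "gab \<xi> \<eta> = gba \<xi>' \<eta>'"
    using h by simp
  then show ?thesis
    using \<xi> \<eta> \<xi>' \<eta>' by auto
qed

lemma mixed_derivatives_eq_at_0:
  fixes g ga gb gab gba :: "real \<Rightarrow> real \<Rightarrow> real"
  assumes r: "0 < r"
    and d1: "\<And>s t. \<bar>s\<bar> < r \<Longrightarrow> \<bar>t\<bar> < r \<Longrightarrow> ((\<lambda>\<sigma>. g \<sigma> t) has_real_derivative ga s t) (at s)"
    and d2: "\<And>s t. \<bar>s\<bar> < r \<Longrightarrow> \<bar>t\<bar> < r \<Longrightarrow> ((\<lambda>\<tau>. g s \<tau>) has_real_derivative gb s t) (at t)"
    and d12: "\<And>s t. \<bar>s\<bar> < r \<Longrightarrow> \<bar>t\<bar> < r \<Longrightarrow> ((\<lambda>\<tau>. ga s \<tau>) has_real_derivative gab s t) (at t)"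
    and d21: "\<And>s t. \<bar>s\<bar> < r \<Longrightarrow> \<bar>t\<bar> < r \<Longrightarrow> ((\<lambda>\<sigma>. gb \<sigma> t) has_real_derivative gba s t) (at s)"
    and c12: "\<And>e. 0 < e \<Longrightarrow> \<exists>d>0. \<forall>s t. \<bar>s\<bar> < d \<longrightarrow> \<bar>t\<bar> < d \<longrightarrow> \<bar>gab s t - gab 0 0\<bar> < e"
    and c21: "\<And>e. 0 < e \<Longrightarrow> \<exists>d>0. \<forall>s t. \<bar>s\<bar> < d \<longrightarrow> \<bar>t\<bar> < d \<longrightarrow> \<bar>gba s t - gba 0 0\<bar> < e"
  shows "gab 0 0 = gba 0 0"
proof (rule ccontr)
  assume ne: "gab 0 0 \<noteq> gba 0 0"
  define e where "e = \<bar>gab 0 0 - gba 0 0\<bar> / 2"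
  have e: "0 < e"
    using ne by (simp add: e_def)
  obtain da where da: "0 < da" "\<forall>s t. \<bar>s\<bar> < da \<longrightarrow> \<bar>t\<bar> < da \<longrightarrow> \<bar>gab s t - gab 0 0\<bar> < e"
    using c12[OF e] by blast
  obtain db where db: "0 < db" "\<forall>s t. \<bar>s\<bar> < db \<longrightarrow> \<bar>t\<bar> < db \<longrightarrow> \<bar>gba s t - gba 0 0\<bar> < e"
    using c21[OF e] by blast
  define h where "h = min r (min da db) / 2"
  have h: "0 < h" "h < r" "h < da" "h < db"
    using r da db by (auto simp: h_def)
  have square: "\<bar>s\<bar> < r" "\<bar>t\<bar> < r" if "s \<in> {0..h}" "t \<in> {0..h}" for s t
    using that h by auto
  have "\<exists>s t s' t'. s \<in> {0<..<h} \<and> t \<in> {0<..<h} \<and> s' \<in> {0<..<h} \<and> t' \<in> {0<..<h}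
          \<and> gab s t = gba s' t'"
    by (rule mixed_difference_quotients_meet[OF h(1), of g ga gb])
      (use square in \<open>blast intro: d1 d2 d12 d21\<close>)+
  then obtain s t s' t' where st: "s \<in> {0<..<h}" "t \<in> {0<..<h}" "s' \<in> {0<..<h}" "t' \<in> {0<..<h}"
    and eq: "gab s t = gba s' t'"
    by blast
  have "\<bar>gab s t - gab 0 0\<bar> < e" "\<bar>gba s' t' - gba 0 0\<bar> < e"
    using da db st h by auto
  then show False
    using eq e_def by (simp add: abs_if split: if_splits)
qed

lemma pd_has_real_derivative:
  assumes "has_partials_on U f" "q + s *\<^sub>R axis i 1 \<in> U"
  shows "((\<lambda>\<sigma>. f (q + \<sigma> *\<^sub>R axis i 1)) has_real_derivative pd f i (q + s *\<^sub>R axis i 1)) (at s)"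
proof -
  have "((\<lambda>\<sigma>. f ((q + s *\<^sub>R axis i 1) + \<sigma> *\<^sub>R axis i 1)) has_real_derivative pd f i (q + s *\<^sub>R axis i 1)) (at 0)"
    using assms DERIV_deriv_iff_real_differentiable unfolding has_partials_on_def pd_def by blast
  then show ?thesis
    using DERIV_shift[of "\<lambda>\<sigma>. f (q + \<sigma> *\<^sub>R axis i 1)" _ 0 s]
    by (simp add: scaleR_add_left ac_simps)
qed

lemma pd_eq_0_if_vanishing:
  assumes "open U" "p \<in> U" "\<And>q. q \<in> U \<Longrightarrow> f q = 0"
  shows "pd f i p = 0"
proof -
  obtain r where r: "0 < r" "ball p r \<subseteq> U"
    using assms(1,2) open_contains_ball by blast
  have "((\<lambda>t. f (p + t *\<^sub>R axis i 1)) has_real_derivative 0) (at 0)"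
  proof (rule has_field_derivative_transform_within_open[where f="\<lambda>_. 0" and S="ball 0 r"])
    fix t :: real
    assume "t \<in> ball 0 r"
    then have "p + t *\<^sub>R axis i 1 \<in> U"
      using r by (auto simp: dist_norm)
    then show "0 = f (p + t *\<^sub>R axis i 1)"
      using assms(3) by simp
  qed (use r in simp_all)
  then show ?thesis
    unfolding pd_def by (rule DERIV_imp_deriv)
qed

lemma pd_commute:
  fixes f :: "real^'i \<Rightarrow> real"
  assumes U: "open U" "p \<in> U" and f: "Ck_on 2 U f"
  shows "pd (pd f i) j p = pd (pd f j) i p"
proof -
  have f1: "has_partials_on U f" and f2: "\<And>k. has_partials_on U (pd f k)"
    and fc: "\<And>k l. continuous_on U (pd (pd f k) l)"
    using f by (simp_all add: numeral_2_eq_2)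
  obtain r where r: "0 < r" "ball p r \<subseteq> U"
    using U open_contains_ball by blast
  define P where "P s t = p + s *\<^sub>R axis i 1 + t *\<^sub>R axis j 1" for s t
  have P_dist: "dist (P s t) p \<le> \<bar>s\<bar> + \<bar>t\<bar>" for s t
    using norm_triangle_ineq[of "s *\<^sub>R axis i (1::real)" "t *\<^sub>R axis j 1"]
    by (simp add: P_def dist_norm)
  have P_in_U: "P s t \<in> U" if "\<bar>s\<bar> < r/2" "\<bar>t\<bar> < r/2" for s t
    using P_dist[of s t] that r by (auto simp: dist_commute)
  have d_s: "((\<lambda>\<sigma>. h (P \<sigma> t)) has_real_derivative pd h i (P s t)) (at s)"
    if "has_partials_on U h" "\<bar>s\<bar> < r/2" "\<bar>t\<bar> < r/2" for h s t
  proof -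
    have "P \<sigma> t = (p + t *\<^sub>R axis j 1) + \<sigma> *\<^sub>R axis i 1" for \<sigma>
      by (simp add: P_def ac_simps)
    then show ?thesis
      using pd_has_real_derivative[OF that(1)] P_in_U[OF that(2,3)] by (simp only:)
  qed
  have d_t: "((\<lambda>\<tau>. h (P s \<tau>)) has_real_derivative pd h j (P s t)) (at t)"
    if "has_partials_on U h" "\<bar>s\<bar> < r/2" "\<bar>t\<bar> < r/2" for h s t
  proof -
    have "P s \<tau> = (p + s *\<^sub>R axis i 1) + \<tau> *\<^sub>R axis j 1" for \<tau>
      by (simp add: P_def)
    then show ?thesis
      using pd_has_real_derivative[OF that(1)] P_in_U[OF that(2,3)] by (simp only:)
  qed
  have cont: "\<exists>d>0. \<forall>s t. \<bar>s\<bar> < d \<longrightarrow> \<bar>t\<bar> < d \<longrightarrow>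
      \<bar>pd (pd f k) l (P s t) - pd (pd f k) l (P 0 0)\<bar> < e" if e: "0 < e" for k l e
  proof -
    have "isCont (pd (pd f k) l) p"
      using fc U continuous_on_eq_continuous_at by blast
    then obtain d where d: "0 < d" "\<forall>x. dist x p < d \<longrightarrow> dist (pd (pd f k) l x) (pd (pd f k) l p) < e"
      using e unfolding continuous_at_eps_delta by blast
    show ?thesis
    proof (intro exI[of _ "d/2"] conjI allI impI)
      fix s t
      assume "\<bar>s\<bar> < d/2" "\<bar>t\<bar> < d/2"
      then have "dist (P s t) p < d"
        using P_dist[of s t] by linarith
      then show "\<bar>pd (pd f k) l (P s t) - pd (pd f k) l (P 0 0)\<bar> < e"
        using d by (simp add: P_def dist_real_def)
    qed (use d in auto)
  qed
  have "pd (pd f i) j (P 0 0) = pd (pd f j) i (P 0 0)"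
    by (rule mixed_derivatives_eq_at_0[where r="r/2" and g="\<lambda>s t. f (P s t)"
          and ga="\<lambda>s t. pd f i (P s t)" and gb="\<lambda>s t. pd f j (P s t)"])
      (use r cont in \<open>auto intro!: d_s d_t f1 f2\<close>)
  then show ?thesis
    by (simp add: P_def)
qed

definition hor_deriv ::
  "('m::finite \<Rightarrow> 'r::finite \<Rightarrow> real^('m + 'r) \<Rightarrow> real) \<Rightarrow> 'm \<Rightarrow> (real^('m + 'r) \<Rightarrow> real) \<Rightarrow> real^('m + 'r) \<Rightarrow> real"
  where "hor_deriv \<Gamma> \<mu> f p = pd f (Inl \<mu>) p + (\<Sum>b\<in>UNIV. \<Gamma> \<mu> b p * pd f (Inr b) p)"

lemma pd_hor_deriv:
  assumes p: "p \<in> U" and \<Gamma>: "\<And>b. has_partials_on U (\<Gamma> \<mu> b)" and f: "\<And>i. has_partials_on U (pd f i)"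
  shows "pd (hor_deriv \<Gamma> \<mu> f) j p = pd (pd f (Inl \<mu>)) j p
           + (\<Sum>b\<in>UNIV. pd (\<Gamma> \<mu> b) j p * pd f (Inr b) p + pd (pd f (Inr b)) j p * \<Gamma> \<mu> b p)"
proof -
  have D: "((\<lambda>t. g (p + t *\<^sub>R axis j 1)) has_real_derivative pd g j p) (at 0)"
    if "has_partials_on U g" for g
    using pd_has_real_derivative[OF that, of p 0] p by simp
  have "((\<lambda>t. hor_deriv \<Gamma> \<mu> f (p + t *\<^sub>R axis j 1)) has_real_derivative
      pd (pd f (Inl \<mu>)) j p
      + (\<Sum>b\<in>UNIV. pd (\<Gamma> \<mu> b) j p * pd f (Inr b) p + pd (pd f (Inr b)) j p * \<Gamma> \<mu> b p)) (at 0)"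
    unfolding hor_deriv_def
    by (intro DERIV_add DERIV_sum D f) (use DERIV_mult[OF D[OF \<Gamma>] D[OF f]] in simp)
  then show ?thesis
    unfolding pd_def[of "hor_deriv \<Gamma> \<mu> f"] by (rule DERIV_imp_deriv)
qed

lemma hor_deriv_commutator:
  assumes p: "p \<in> U" and \<Gamma>: "\<And>\<mu> b. has_partials_on U (\<Gamma> \<mu> b)"
    and f: "\<And>i. has_partials_on U (pd f i)"
    and f_sym: "\<And>i j. pd (pd f i) j p = pd (pd f j) i p"
  shows "hor_deriv \<Gamma> \<mu> (hor_deriv \<Gamma> \<nu> f) p - hor_deriv \<Gamma> \<nu> (hor_deriv \<Gamma> \<mu> f) p
           = (\<Sum>b\<in>UNIV. curv \<Gamma> b \<mu> \<nu> p * pd f (Inr b) p)"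
proof -
  define S where "S \<mu> \<nu> = pd (pd f (Inl \<nu>)) (Inl \<mu>) p
      + (\<Sum>b\<in>UNIV. pd (pd f (Inr b)) (Inl \<mu>) p * \<Gamma> \<nu> b p)
      + (\<Sum>c\<in>UNIV. \<Gamma> \<mu> c p * pd (pd f (Inl \<nu>)) (Inr c) p)
      + (\<Sum>c\<in>UNIV. \<Sum>b\<in>UNIV. \<Gamma> \<mu> c p * pd (pd f (Inr b)) (Inr c) p * \<Gamma> \<nu> b p)" for \<mu> \<nu>
  define F where "F \<mu> \<nu> = (\<Sum>b\<in>UNIV. pd (\<Gamma> \<nu> b) (Inl \<mu>) p * pd f (Inr b) p)
      + (\<Sum>c\<in>UNIV. \<Gamma> \<mu> c p * (\<Sum>b\<in>UNIV. pd (\<Gamma> \<nu> b) (Inr c) p * pd f (Inr b) p))" for \<mu> \<nu>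
  have S_plus_F: "hor_deriv \<Gamma> \<mu> (hor_deriv \<Gamma> \<nu> f) p = S \<mu> \<nu> + F \<mu> \<nu>" for \<mu> \<nu>
    unfolding hor_deriv_def[of \<Gamma> \<mu> "hor_deriv \<Gamma> \<nu> f"] pd_hor_deriv[OF p \<Gamma> f] S_def F_def
    by (simp add: sum.distrib distrib_left sum_distrib_left algebra_simps)
  have "S \<mu> \<nu> = S \<nu> \<mu>"
  proof -
    have "(\<Sum>b\<in>UNIV. pd (pd f (Inr b)) (Inl \<mu>) p * \<Gamma> \<nu> b p)
        = (\<Sum>c\<in>UNIV. \<Gamma> \<nu> c p * pd (pd f (Inl \<mu>)) (Inr c) p)"
      "(\<Sum>b\<in>UNIV. pd (pd f (Inr b)) (Inl \<nu>) p * \<Gamma> \<mu> b p)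
        = (\<Sum>c\<in>UNIV. \<Gamma> \<mu> c p * pd (pd f (Inl \<nu>)) (Inr c) p)"
      using f_sym by (simp_all add: mult.commute)
    moreover have "(\<Sum>c\<in>UNIV. \<Sum>b\<in>UNIV. \<Gamma> \<mu> c p * pd (pd f (Inr b)) (Inr c) p * \<Gamma> \<nu> b p)
        = (\<Sum>c\<in>UNIV. \<Sum>b\<in>UNIV. \<Gamma> \<nu> c p * pd (pd f (Inr b)) (Inr c) p * \<Gamma> \<mu> b p)"
      by (subst sum.swap) (simp add: f_sym mult_ac)
    ultimately show ?thesis
      unfolding S_def using f_sym by (simp add: ac_simps)
  qed
  moreover have "F \<mu> \<nu> - F \<nu> \<mu> = (\<Sum>b\<in>UNIV. curv \<Gamma> b \<mu> \<nu> p * pd f (Inr b) p)"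
  proof -
    have swap: "(\<Sum>c\<in>UNIV. \<Gamma> \<kappa> c p * (\<Sum>b\<in>UNIV. pd (\<Gamma> \<iota> b) (Inr c) p * pd f (Inr b) p))
        = (\<Sum>b\<in>UNIV. (\<Sum>c\<in>UNIV. \<Gamma> \<kappa> c p * pd (\<Gamma> \<iota> b) (Inr c) p) * pd f (Inr b) p)" for \<kappa> \<iota>
      unfolding sum_distrib_left sum_distrib_right by (subst sum.swap) (simp add: mult_ac)
    show ?thesis
      unfolding F_def curv_def swap
      by (simp add: left_diff_distrib distrib_right sum.distrib sum_subtractf)
  qed
  ultimately show ?thesis
    unfolding S_plus_F by simp
qed

lemma fibre_jacobian_injective:
  fixes ut :: "'r::finite \<Rightarrow> real^('m::finite + 'r) \<Rightarrow> real"
  assumes J: "invertible (jacobian (new_coords ut) p)"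
    and v: "\<And>a. (\<Sum>b\<in>UNIV. pd (ut a) (Inr b) p * v b) = 0"
  shows "v b = 0"
proof -
  define J where "J = jacobian (new_coords ut) p"
  define w :: "real^('m + 'r)" where "w = (\<chi> i. case i of Inl _ \<Rightarrow> 0 | Inr b \<Rightarrow> v b)"
  have sum_UNIV_Plus: "sum g UNIV = (\<Sum>\<mu>\<in>UNIV. g (Inl \<mu>)) + (\<Sum>b\<in>UNIV. g (Inr b))"
    for g :: "'m + 'r \<Rightarrow> real"
    using sum.Plus[of "UNIV :: 'm set" "UNIV :: 'r set" g] by (simp add: comp_def)
  have J_fibre: "J $ Inr a $ Inr b = pd (ut a) (Inr b) p" for a b
    by (simp add: J_def jacobian_def new_coords_def)
  have J_base: "J $ Inl \<mu> $ Inr b = 0" for \<mu> b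
  proof -
    have "(\<lambda>t. (p + t *\<^sub>R axis (Inr b) 1) $ Inl \<mu>) = (\<lambda>t. p $ Inl \<mu>)"
      by (simp add: axis_def)
    then show ?thesis
      by (simp add: J_def jacobian_def new_coords_def pd_def DERIV_imp_deriv[OF DERIV_const])
  qed
  have "(J *v w) $ k = 0" for k
    by (cases k) (simp_all add: matrix_vector_mult_def sum_UNIV_Plus w_def J_base J_fibre v)
  then have "J *v w = 0"
    by (simp add: vec_eq_iff)
  moreover obtain B where "B ** J = mat 1"
    using J unfolding invertible_def J_def by blast
  ultimately have "w = 0"
    using matrix_left_invertible_ker by blast
  then have "w $ Inr b = 0"
    by simp
  then show ?thesis
    by (simp add: w_def)
qed

theorem proposition5p4:
  fixes \<Gamma> :: "'m::finite \<Rightarrow> 'r::finite \<Rightarrow> real^('m + 'r) \<Rightarrow> real"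
    and ut :: "'r \<Rightarrow> real^('m + 'r) \<Rightarrow> real"
    and U :: "(real^('m + 'r)) set"
  assumes U_open: "open U"
    and \<Gamma>_C1: "\<And>\<mu> a. Ck_on 1 U (\<Gamma> \<mu> a)"
    and ut_smooth: "\<And>a. smooth_fun_on U (ut a)"
    and ut_inj: "inj_on (new_coords ut) U"
    and ut_chart: "\<And>p. p \<in> U \<Longrightarrow> invertible (jacobian (new_coords ut) p)"
    and normal_eq: "\<And>p a \<mu>. p \<in> U \<Longrightarrow>
        (\<Sum>b\<in>UNIV. pd (ut a) (Inr b) p * \<Gamma> \<mu> b p) + pd (ut a) (Inl \<mu>) p = 0"
  shows "\<forall>p\<in>U. \<forall>a \<mu> \<nu>. curv \<Gamma> a \<mu> \<nu> p = 0"
proof (intro ballI allI)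
  (* The argument is pointwise. *)
  fix p a \<mu> \<nu>
  assume p: "p \<in> U"
  have ut_C2: "Ck_on 2 U (ut c)" for c
    using ut_smooth unfolding smooth_fun_on_def by blast
  then have ut_partials: "has_partials_on U (pd (ut c) i)" for c i
    by (simp add: numeral_2_eq_2)
  have \<Gamma>_partials: "has_partials_on U (\<Gamma> \<kappa> b)" for \<kappa> b
    using \<Gamma>_C1 by simp
  have ut_flat: "hor_deriv \<Gamma> \<kappa> (ut c) q = 0" if "q \<in> U" for \<kappa> c q
    using normal_eq[OF that] by (simp add: hor_deriv_def mult.commute add.commute)
  have "hor_deriv \<Gamma> \<kappa> (hor_deriv \<Gamma> \<iota> (ut c)) p = 0" for \<kappa> \<iota> c
    using pd_eq_0_if_vanishing[OF U_open p ut_flat] by (simp add: hor_deriv_def[of \<Gamma> \<kappa>])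
  then have "(\<Sum>b\<in>UNIV. pd (ut c) (Inr b) p * curv \<Gamma> b \<mu> \<nu> p) = 0" for c
    using hor_deriv_commutator[where \<Gamma>=\<Gamma>, OF p \<Gamma>_partials ut_partials pd_commute[OF U_open p ut_C2]]
    by (simp add: mult.commute)
  then show "curv \<Gamma> a \<mu> \<nu> p = 0"
    by (rule fibre_jacobian_injective[OF ut_chart[OF p]])
qed

end
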